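(* Let $T=(V,E)$ be a finite tree with $V=\{1,\dots,n\}$, rooted at a vertex $v_0$ and equipped with a fixed left-to-right ordering of children, and let $e_i=(p_i,q_i)$, $i=1,\dots,k$, be its edges, where $p_i$ is the parent of $q_i$, enumerated level by level starting from the root and proceeding from left to right at every depth (breadth-first order). Let $N$ be a symmetric positive definite $n\times n$ real matrix and $M=N_T$. For $j=2,\dots,k$ let $A_j=\bigcup_{i=1}^{j-1}\{p_i,q_i\}\setminus\{p_j\}$, $$\sigma_j=M_{p_j,p_j}-M_{p_j,A_j}M_{A_j,A_j}^{-1}M_{A_j,p_j},\qquad \eta_j=M_{p_j,p_j}-M_{p_j,q_j}^2M_{q_j,q_j}^{-1}.$$ Then $M$ is positive definite if and only if $\sigma_j+\eta_j-M_{p_j,p_j}>0$ for every $j=2,\dots,k$.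
   Context: For a symmetric $n\times n$ real matrix $N=(n_{ij})$, $N_T$ is defined by $(N_T)_{ij}=n_{ij}$ if $i=j$ or $(i,j)\in E$, and $0$ otherwise. For index sets $X,Y$, $M_{XY}$ denotes the submatrix of $M$ with rows in $X$ and columns in $Y$; for a single vertex $x$, $M_{x,Y}$ denotes the corresponding row vector and $M_{x,x}$ the diagonal entry. *)

theory Defs
  imports "Jordan_Normal_Form.Gauss_Jordan_Elimination" "Jordan_Normal_Form.DL_Submatrix"
begin

text \<open>Vertices are 0,...,n-1 (labelling immaterial). An ordered rooted tree is given by its
  root v0 and a function ch mapping each vertex to the list of its children, listed
  from left to right.\<close>

definition ordered_rooted_tree :: "nat \<Rightarrow> nat \<Rightarrow> (nat \<Rightarrow> nat list) \<Rightarrow> bool" where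
  "ordered_rooted_tree n v0 ch \<longleftrightarrow>
     v0 < n
   \<and> (\<forall>v. set (ch v) \<subseteq> {0..<n} \<and> distinct (ch v))
   \<and> (\<forall>v. v \<ge> n \<longrightarrow> ch v = [])
   \<and> (\<forall>v<n. v0 \<notin> set (ch v))
   \<and> (\<forall>w<n. w \<noteq> v0 \<longrightarrow> (\<exists>!v. v < n \<and> w \<in> set (ch v)))
   \<and> (\<forall>w<n. (v0, w) \<in> {(u, c). c \<in> set (ch u)}\<^sup>*)"

definition tree_adj :: "(nat \<Rightarrow> nat list) \<Rightarrow> nat \<Rightarrow> nat \<Rightarrow> bool" where
  "tree_adj ch i j \<longleftrightarrow> j \<in> set (ch i) \<or> i \<in> set (ch j)"

fun level :: "(nat \<Rightarrow> nat list) \<Rightarrow> nat \<Rightarrow> nat \<Rightarrow> nat list" where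
  "level ch v0 0 = [v0]"
| "level ch v0 (Suc d) = concat (map ch (level ch v0 d))"

definition bfs_edges :: "nat \<Rightarrow> nat \<Rightarrow> (nat \<Rightarrow> nat list) \<Rightarrow> (nat \<times> nat) list" where
  "bfs_edges n v0 ch =
     concat (map (\<lambda>d. concat (map (\<lambda>p. map (\<lambda>c. (p, c)) (ch p)) (level ch v0 d))) [0..<n])"

definition tree_part :: "(nat \<Rightarrow> nat list) \<Rightarrow> real mat \<Rightarrow> real mat" where
  "tree_part ch N = mat (dim_row N) (dim_col N)
     (\<lambda>(i, j). if i = j \<or> tree_adj ch i j then N $$ (i, j) else 0)"

definition symmetric_mat :: "'a mat \<Rightarrow> bool" where
  "symmetric_mat A \<longleftrightarrow> A\<^sup>T = A"

definition pos_def :: "real mat \<Rightarrow> bool" where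
  "pos_def A \<longleftrightarrow> dim_row A = dim_col A \<and>
     (\<forall>x \<in> carrier_vec (dim_row A). x \<noteq> 0\<^sub>v (dim_row A) \<longrightarrow> x \<bullet> (A *\<^sub>v x) > 0)"

text \<open>Matrix inverse (junk value if the matrix is singular).\<close>
definition inv_mat :: "real mat \<Rightarrow> real mat" where
  "inv_mat A = the (mat_inverse A)"

definition sigma_val :: "real mat \<Rightarrow> nat \<Rightarrow> nat set \<Rightarrow> real" where
  "sigma_val M p A = M $$ (p, p)
     - (submatrix M {p} A * inv_mat (submatrix M A A) * submatrix M A {p}) $$ (0, 0)"

definition eta_val :: "real mat \<Rightarrow> nat \<Rightarrow> nat \<Rightarrow> real" where
  "eta_val M p q = M $$ (p, p) - (M $$ (p, q))\<^sup>2 * inverse (M $$ (q, q))"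

end

theory Submission
  imports Defs "Jordan_Normal_Form.Determinant"
begin

text \<open>Every edge \<open>(p\<^sub>j, q\<^sub>j)\<close> with \<open>j \<ge> 2\<close> attaches a
  vertex \<open>q\<^sub>j\<close> not seen before to an already visited vertex \<open>p\<^sub>j\<close>, and among the visited
  vertices \<open>q\<^sub>j\<close> is adjacent only to \<open>p\<^sub>j\<close>. Completing the square twice on the visited set --
  first eliminating the block \<open>A\<^sub>j\<close>, whose Schur complement is \<open>\<sigma>\<^sub>j\<close>, then the leaf
  \<open>q\<^sub>j\<close> -- writes the quadratic form of \<open>M\<close> as
  \<open>x\<^sub>p\<^sup>2 (\<sigma>\<^sub>j + \<eta>\<^sub>j - M\<^sub>p\<^sub>p)\<close> plus a positive definite form in the other variables.
  So \<open>M\<close> is positive definite on the vertices of the first \<open>j\<close> edges iff it is so on those of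
  the first \<open>j - 1\<close> edges and \<open>\<sigma>\<^sub>j + \<eta>\<^sub>j - M\<^sub>p\<^sub>p > 0\<close>. On the first edge \<open>M\<close> agrees
  with \<open>N\<close>, hence is positive definite there.\<close>

section \<open>Quadratic forms on index sets\<close>

text \<open>Positive definiteness of the principal submatrix \<open>M\<^bsub>S,S\<^esub>\<close>, with vectors indexed by
  the elements of \<open>S\<close> themselves.\<close>

definition quad_form :: "real mat \<Rightarrow> nat set \<Rightarrow> (nat \<Rightarrow> real) \<Rightarrow> real" where
  "quad_form M S x = (\<Sum>i\<in>S. \<Sum>j\<in>S. x i * M $$ (i, j) * x j)"

definition pos_def_on :: "real mat \<Rightarrow> nat set \<Rightarrow> bool" where
  "pos_def_on M S \<longleftrightarrow> (\<forall>x. (\<exists>i\<in>S. x i \<noteq> 0) \<longrightarrow> quad_form M S x > 0)"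

lemma pos_def_onI:
  "(\<And>x i. i \<in> S \<Longrightarrow> x i \<noteq> 0 \<Longrightarrow> quad_form M S x > 0) \<Longrightarrow> pos_def_on M S"
  unfolding pos_def_on_def by blast

lemma pos_def_onD: "pos_def_on M S \<Longrightarrow> i \<in> S \<Longrightarrow> x i \<noteq> 0 \<Longrightarrow> quad_form M S x > 0"
  unfolding pos_def_on_def by blast

lemma quad_form_eq_0: "(\<And>i. i \<in> S \<Longrightarrow> x i = 0) \<Longrightarrow> quad_form M S x = 0"
  by (simp add: quad_form_def)

lemma pos_def_on_nonneg: "pos_def_on M S \<Longrightarrow> quad_form M S x \<ge> 0"
  unfolding pos_def_on_def by (metis less_eq_real_def quad_form_eq_0)

lemma pos_def_on_cong:
  assumes "\<And>i j. i \<in> S \<Longrightarrow> j \<in> S \<Longrightarrow> M $$ (i, j) = M' $$ (i, j)"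
  shows "pos_def_on M S = pos_def_on M' S"
proof -
  have "quad_form M S x = quad_form M' S x" for x
    unfolding quad_form_def using assms by (intro sum.cong) auto
  then show ?thesis unfolding pos_def_on_def by simp
qed

lemma pos_def_on_singleton_iff: "pos_def_on M {a} \<longleftrightarrow> 0 < M $$ (a, a)"
proof -
  have form: "quad_form M {a} x = M $$ (a, a) * (x a)\<^sup>2" for x
    by (simp add: quad_form_def power2_eq_square)
  have "pos_def_on M {a} \<longleftrightarrow> (\<forall>x. x a \<noteq> 0 \<longrightarrow> 0 < M $$ (a, a) * (x a)\<^sup>2)"
    unfolding pos_def_on_def form by simp
  also have "\<dots> \<longleftrightarrow> 0 < M $$ (a, a)"
  proof
    assume "\<forall>x. x a \<noteq> 0 \<longrightarrow> 0 < M $$ (a, a) * (x a)\<^sup>2"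
    from this[rule_format, of "\<lambda>_. 1"] show "0 < M $$ (a, a)" by simp
  qed (simp add: zero_less_mult_iff)
  finally show ?thesis .
qed

lemma quad_form_extend_zero:
  assumes "S \<subseteq> T" "finite T"
  shows "quad_form M T (\<lambda>i. if i \<in> S then x i else 0) = quad_form M S x"
proof -
  have "quad_form M T (\<lambda>i. if i \<in> S then x i else 0)
      = (\<Sum>i\<in>T. if i \<in> S then (\<Sum>j\<in>S. x i * M $$ (i, j) * x j) else 0)"
    unfolding quad_form_def
    by (rule sum.cong, simp) (auto intro!: sum.mono_neutral_cong_right assms)
  also have "\<dots> = quad_form M S x"
    unfolding quad_form_def by (rule sum.mono_neutral_cong_right[OF assms(2,1)]) auto
  finally show ?thesis .
qed

lemma pos_def_on_subset:
  assumes "pos_def_on M T" "S \<subseteq> T" "finite T"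
  shows "pos_def_on M S"
proof (rule pos_def_onI)
  fix x :: "nat \<Rightarrow> real" and i
  assume "i \<in> S" "x i \<noteq> 0"
  then have "quad_form M T (\<lambda>i. if i \<in> S then x i else 0) > 0"
    using assms(2) by (intro pos_def_onD[OF assms(1), of i]) auto
  then show "quad_form M S x > 0" using quad_form_extend_zero[OF assms(2,3)] by simp
qed

lemma quad_form_vec:
  assumes "M \<in> carrier_mat n n"
  shows "vec n x \<bullet> (M *\<^sub>v vec n x) = quad_form M {0..<n} x"
proof -
  have "(M *\<^sub>v vec n x) $ i = (\<Sum>j\<in>{0..<n}. M $$ (i, j) * x j)" if "i < n" for i
    using that assms by (simp add: scalar_prod_def row_def)
  then show ?thesis
    using assms unfolding quad_form_def scalar_prod_def
    by (simp add: sum_distrib_left mult.assoc)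
qed

lemma pos_def_iff_pos_def_on:
  assumes M: "M \<in> carrier_mat n n"
  shows "pos_def M \<longleftrightarrow> pos_def_on M {0..<n}"
proof -
  have vec_nth: "vec n (($) v) = v" if "v \<in> carrier_vec n" for v
    using that by (intro eq_vecI) auto
  have nonzero: "vec n x \<noteq> 0\<^sub>v n \<longleftrightarrow> (\<exists>i\<in>{0..<n}. x i \<noteq> 0)" for x :: "nat \<Rightarrow> real"
    by (auto simp: vec_eq_iff)
  have "(\<forall>v\<in>carrier_vec n. v \<noteq> 0\<^sub>v n \<longrightarrow> v \<bullet> (M *\<^sub>v v) > 0)
      \<longleftrightarrow> (\<forall>x. vec n x \<noteq> 0\<^sub>v n \<longrightarrow> vec n x \<bullet> (M *\<^sub>v vec n x) > 0)"
    by (metis vec_carrier vec_nth)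
  then show ?thesis
    using M unfolding pos_def_def pos_def_on_def nonzero quad_form_vec[OF M] by auto
qed

definition pick_index :: "nat set \<Rightarrow> nat \<Rightarrow> nat" where
  "pick_index A a = card {b\<in>A. b < a}"

lemma pick_pick_index:
  assumes "finite A" "a \<in> A"
  shows "pick A (pick_index A a) = a" "pick_index A a < card A"
proof -
  show "pick A (pick_index A a) = a"
    unfolding pick_index_def using pick_card_in_set[OF assms(2)] .
  have "{b\<in>A. b < a} \<subset> A" using assms(2) by auto
  then show "pick_index A a < card A"
    unfolding pick_index_def using assms(1) by (simp add: psubset_card_mono)
qed

lemma pick_index_pick:
  assumes "i < card A"
  shows "pick A i \<in> A" "pick_index A (pick A i) = i"
  using pick_in_set_le[OF assms] card_pick_le[OF assms] unfolding pick_index_def by auto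

lemma sum_reindex_pick:
  assumes "finite A"
  shows "(\<Sum>a\<in>A. f a) = (\<Sum>i<card A. f (pick A i))"
proof -
  have "bij_betw (pick A) {..<card A} A"
    by (rule bij_betw_byWitness[where f' = "pick_index A"])
      (use pick_index_pick pick_pick_index[OF assms] in auto)
  then show ?thesis by (simp add: sum.reindex_bij_betw)
qed

lemma Collect_less_mem_eq: "I \<subseteq> {0..<n::nat} \<Longrightarrow> {i. i < n \<and> i \<in> I} = I"
  by fastforce

lemma submatrix_carrier:
  assumes "M \<in> carrier_mat n n" "I \<subseteq> {0..<n}" "J \<subseteq> {0..<n}"
  shows "submatrix M I J \<in> carrier_mat (card I) (card J)"
proof -
  have "dim_row M = n" "dim_col M = n" using assms(1) by auto
  then show ?thesis
    using assms(2,3) by (intro carrier_matI) (simp_all only: dim_submatrix Collect_less_mem_eq)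
qed

lemma submatrix_index_pick:
  assumes "M \<in> carrier_mat n n" "I \<subseteq> {0..<n}" "J \<subseteq> {0..<n}" "i < card I" "j < card J"
  shows "submatrix M I J $$ (i, j) = M $$ (pick I i, pick J j)"
proof -
  have "dim_row M = n" "dim_col M = n" using assms(1) by auto
  then show ?thesis
    using assms(2-5) by (intro submatrix_index) (simp_all only: Collect_less_mem_eq)
qed

lemma pick_singleton: "pick {p} 0 = p"
  by (auto intro: Least_equality)

lemma quad_form_submatrix:
  assumes "M \<in> carrier_mat n n" "A \<subseteq> {0..<n}"
  shows "quad_form M A x = quad_form (submatrix M A A) {0..<card A} (\<lambda>i. x (pick A i))"
proof -
  have "finite A" using assms(2) finite_subset by blast
  then show ?thesis
    unfolding quad_form_def
    by (simp add: sum_reindex_pick[of A] atLeast0LessThan submatrix_index_pick[OF assms(1,2,2)])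
qed

section \<open>Schur complements\<close>

lemma pos_def_on_det_submatrix:
  assumes M: "M \<in> carrier_mat n n" and A: "A \<subseteq> {0..<n}" and pd: "pos_def_on M A"
  shows "det (submatrix M A A) \<noteq> 0"
proof
  let ?B = "submatrix M A A" and ?m = "card A"
  have B: "?B \<in> carrier_mat ?m ?m" by (rule submatrix_carrier[OF M A A])
  assume "det ?B = 0"
  then obtain v where v: "v \<in> carrier_vec ?m" "v \<noteq> 0\<^sub>v ?m" "?B *\<^sub>v v = 0\<^sub>v ?m"
    using det_0_iff_vec_prod_zero[OF B] by blast
  define x where "x a = (if a \<in> A then v $ pick_index A a else 0)" for a
  have "finite A" using A finite_subset by blast
  have x_pick: "x (pick A i) = v $ i" if "i < ?m" for i
    using pick_index_pick[OF that] unfolding x_def by auto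
  have "vec ?m (\<lambda>i. x (pick A i)) = v" using v(1) x_pick by (intro eq_vecI) auto
  then have "quad_form M A x = v \<bullet> (?B *\<^sub>v v)"
    using quad_form_submatrix[OF M A] quad_form_vec[OF B] by metis
  also have "\<dots> = 0" using v by simp
  finally have "quad_form M A x = 0" .
  moreover obtain i where "i < ?m" "v $ i \<noteq> 0" using v(1,2) by (auto simp: vec_eq_iff)
  then have "quad_form M A x > 0"
    using pos_def_onD[OF pd, of "pick A i" x] pick_index_pick x_pick by simp
  ultimately show False by simp
qed

lemma inv_mat_right_inverse:
  assumes B: "B \<in> carrier_mat m m" and "det B \<noteq> 0"
  shows "inv_mat B \<in> carrier_mat m m" "B * inv_mat B = 1\<^sub>m m"
proof -
  have "B \<in> Units (ring_mat TYPE(real) m ())" using det_non_zero_imp_unit[OF assms] .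
  then obtain Bi where "mat_inverse B = Some Bi" using mat_inverse(1)[OF B] by fastforce
  then show "inv_mat B \<in> carrier_mat m m" "B * inv_mat B = 1\<^sub>m m"
    using mat_inverse(2)[OF B] unfolding inv_mat_def by auto
qed

lemma mult_mat_index_sum:
  assumes "X \<in> carrier_mat a m" "Y \<in> carrier_mat m b" "i < a" "j < b"
  shows "(X * Y) $$ (i, j) = (\<Sum>l<m. X $$ (i, l) * Y $$ (l, j))"
  using assms by (simp add: scalar_prod_def atLeast0LessThan)

text \<open>The column \<open>z = M\<^bsub>A,A\<^esub>\<^sup>-\<^sup>1 M\<^bsub>A,p\<^esub>\<close>, written as a function on \<open>A\<close>.\<close>

lemma schur_complement_solution:
  assumes M: "M \<in> carrier_mat n n" and A: "A \<subseteq> {0..<n}" and p: "p < n"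
    and pd: "pos_def_on M A"
  obtains z where "\<And>a. a \<in> A \<Longrightarrow> (\<Sum>b\<in>A. M $$ (a, b) * z b) = M $$ (a, p)"
    and "sigma_val M p A = M $$ (p, p) - (\<Sum>b\<in>A. M $$ (p, b) * z b)"
proof -
  let ?m = "card A"
  define B where "B = submatrix M A A"
  define C where "C = submatrix M A {p}"
  define R where "R = submatrix M {p} A"
  have P: "{p} \<subseteq> {0..<n}" using p by simp
  have B: "B \<in> carrier_mat ?m ?m" unfolding B_def by (rule submatrix_carrier[OF M A A])
  have C: "C \<in> carrier_mat ?m 1" using submatrix_carrier[OF M A P] unfolding C_def by simp
  have R: "R \<in> carrier_mat 1 ?m" using submatrix_carrier[OF M P A] unfolding R_def by simp
  have Bi: "inv_mat B \<in> carrier_mat ?m ?m" "B * inv_mat B = 1\<^sub>m ?m"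
    using inv_mat_right_inverse[OF B] pos_def_on_det_submatrix[OF M A pd] unfolding B_def by auto
  define Z where "Z = inv_mat B * C"
  have Z: "Z \<in> carrier_mat ?m 1" unfolding Z_def using Bi C by simp
  have BZ: "B * Z = C"
    unfolding Z_def using Bi B C by (simp add: assoc_mult_mat[symmetric, OF B Bi(1) C])
  define z where "z a = Z $$ (pick_index A a, 0)" for a
  have "finite A" using A finite_subset by blast
  have sum_z: "(\<Sum>b\<in>A. M $$ (a, b) * z b) = (\<Sum>l<?m. M $$ (a, pick A l) * Z $$ (l, 0))" for a
    unfolding z_def sum_reindex_pick[OF \<open>finite A\<close>] by (intro sum.cong) (auto simp: pick_index_pick)
  have solves: "(\<Sum>b\<in>A. M $$ (a, b) * z b) = M $$ (a, p)" if "a \<in> A" for a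
  proof -
    have i: "pick_index A a < ?m" "pick A (pick_index A a) = a"
      using pick_pick_index[OF \<open>finite A\<close> that] by auto
    have "(\<Sum>b\<in>A. M $$ (a, b) * z b) = (\<Sum>l<?m. B $$ (pick_index A a, l) * Z $$ (l, 0))"
      unfolding sum_z B_def using i by (intro sum.cong) (auto simp: submatrix_index_pick[OF M A A])
    also have "\<dots> = (B * Z) $$ (pick_index A a, 0)"
      using mult_mat_index_sum[OF B Z i(1), of 0] by simp
    also have "\<dots> = M $$ (a, p)"
      unfolding BZ C_def using i submatrix_index_pick[OF M A P, of _ 0]
      by (simp del: pick.simps add: pick_singleton)
    finally show ?thesis .
  qed
  have "submatrix M {p} A * inv_mat (submatrix M A A) * submatrix M A {p} = R * Z"
    unfolding B_def[symmetric] C_def[symmetric] R_def[symmetric] Z_def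
    using R Bi C by (simp add: assoc_mult_mat[OF R Bi(1) C])
  then have "(submatrix M {p} A * inv_mat (submatrix M A A) * submatrix M A {p}) $$ (0, 0)
      = (\<Sum>l<?m. R $$ (0, l) * Z $$ (l, 0))"
    using mult_mat_index_sum[OF R Z, of 0 0] by simp
  also have "\<dots> = (\<Sum>b\<in>A. M $$ (p, b) * z b)"
    unfolding sum_z R_def
    by (intro sum.cong) (auto simp del: pick.simps simp: submatrix_index_pick[OF M P A] pick_singleton)
  finally have "sigma_val M p A = M $$ (p, p) - (\<Sum>b\<in>A. M $$ (p, b) * z b)"
    unfolding sigma_val_def by (simp only:)
  with solves show thesis by (rule that)
qed

lemma quad_form_insert:
  assumes "finite S" "q \<notin> S"
  shows "quad_form M (insert q S) x = x q * M $$ (q, q) * x q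
    + (\<Sum>j\<in>S. x q * M $$ (q, j) * x j) + (\<Sum>i\<in>S. x i * M $$ (i, q) * x q) + quad_form M S x"
  unfolding quad_form_def using assms by (simp add: sum.distrib)

lemma quad_form_insert_complete_square:
  assumes A: "finite A" "p \<notin> A"
    and sym: "\<And>a b. a \<in> insert p A \<Longrightarrow> b \<in> insert p A \<Longrightarrow> M $$ (a, b) = M $$ (b, a)"
    and z: "\<And>a. a \<in> A \<Longrightarrow> (\<Sum>b\<in>A. M $$ (a, b) * z b) = M $$ (a, p)"
  shows "quad_form M (insert p A) x
    = (x p)\<^sup>2 * (M $$ (p, p) - (\<Sum>b\<in>A. M $$ (p, b) * z b)) + quad_form M A (\<lambda>a. x a + x p * z a)"
proof -
  define t where "t = x p"
  define s where "s = (\<Sum>a\<in>A. x a * M $$ (a, p))"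
  define c where "c = (\<Sum>b\<in>A. M $$ (p, b) * z b)"
  have "(\<Sum>j\<in>A. t * M $$ (p, j) * x j) = t * s" "(\<Sum>i\<in>A. x i * M $$ (i, p) * t) = t * s"
    unfolding s_def using sym by (auto simp: sum_distrib_left mult_ac intro!: sum.cong)
  then have lhs: "quad_form M (insert p A) x = t * t * M $$ (p, p) + 2 * t * s + quad_form M A x"
    using quad_form_insert[OF A] unfolding t_def by simp
  have "(\<Sum>i\<in>A. \<Sum>j\<in>A. z i * M $$ (i, j) * x j) = (\<Sum>j\<in>A. x j * (\<Sum>i\<in>A. M $$ (j, i) * z i))"
    using sym by (subst sum.swap) (auto simp: sum_distrib_left mult_ac intro!: sum.cong)
  then have cross: "(\<Sum>i\<in>A. \<Sum>j\<in>A. z i * M $$ (i, j) * x j) = s"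
    unfolding s_def using z by simp
  have "(\<Sum>i\<in>A. x i * (\<Sum>j\<in>A. M $$ (i, j) * z j)) = s"
    "(\<Sum>i\<in>A. z i * (\<Sum>j\<in>A. M $$ (i, j) * z j)) = c"
    unfolding s_def c_def using z sym by (auto simp: mult.commute intro!: sum.cong)
  moreover have "quad_form M A (\<lambda>a. x a + t * z a) = quad_form M A x
      + t * (\<Sum>i\<in>A. x i * (\<Sum>j\<in>A. M $$ (i, j) * z j))
      + t * (\<Sum>i\<in>A. \<Sum>j\<in>A. z i * M $$ (i, j) * x j)
      + t\<^sup>2 * (\<Sum>i\<in>A. z i * (\<Sum>j\<in>A. M $$ (i, j) * z j))"
    unfolding quad_form_def
    by (simp add: sum.distrib sum_distrib_left algebra_simps power2_eq_square)
  ultimately have "quad_form M A (\<lambda>a. x a + t * z a) = quad_form M A x + 2 * t * s + t * t * c"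
    using cross by (simp add: power2_eq_square)
  then show ?thesis
    unfolding t_def[symmetric] c_def[symmetric] lhs by (simp add: algebra_simps power2_eq_square)
qed

lemma symmetric_mat_index:
  assumes "symmetric_mat M" "M \<in> carrier_mat n n" "i < n" "j < n"
  shows "M $$ (i, j) = M $$ (j, i)"
  using assms unfolding symmetric_mat_def by (metis carrier_matD index_transpose_mat(1))

lemma quad_form_insert_schur:
  assumes M: "M \<in> carrier_mat n n" "symmetric_mat M"
    and A: "A \<subseteq> {0..<n}" and p: "p < n" "p \<notin> A" and pd: "pos_def_on M A"
  obtains z where
    "\<And>x. quad_form M (insert p A) x = (x p)\<^sup>2 * sigma_val M p A + quad_form M A (\<lambda>a. x a + x p * z a)"
proof -
  obtain z where z: "\<And>a. a \<in> A \<Longrightarrow> (\<Sum>b\<in>A. M $$ (a, b) * z b) = M $$ (a, p)"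
    and sigma: "sigma_val M p A = M $$ (p, p) - (\<Sum>b\<in>A. M $$ (p, b) * z b)"
    using schur_complement_solution[OF M(1) A p(1) pd] by blast
  have "finite A" using A finite_subset by blast
  moreover have "insert p A \<subseteq> {0..<n}" using A p by simp
  then have "M $$ (a, b) = M $$ (b, a)" if "a \<in> insert p A" "b \<in> insert p A" for a b
    using that by (intro symmetric_mat_index[OF M(2,1)]) auto
  ultimately show thesis
    using that quad_form_insert_complete_square[OF _ p(2) _ z] unfolding sigma by blast
qed

section \<open>Attaching a leaf\<close>

lemma quad_form_insert_leaf:
  assumes S: "finite S" "q \<notin> S" "p \<in> S"
    and sym: "M $$ (p, q) = M $$ (q, p)"
    and leaf: "\<And>a. a \<in> S \<Longrightarrow> a \<noteq> p \<Longrightarrow> M $$ (q, a) = 0 \<and> M $$ (a, q) = 0"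
    and e: "M $$ (q, q) \<noteq> 0"
  shows "quad_form M (insert q S) x = quad_form M S x - (x p)\<^sup>2 * (M $$ (p, q))\<^sup>2 / M $$ (q, q)
    + M $$ (q, q) * (x q + x p * M $$ (p, q) / M $$ (q, q))\<^sup>2"
proof -
  have S_eq: "S = insert p (S - {p})" using S(3) by auto
  have "(\<Sum>j\<in>S. x q * M $$ (q, j) * x j) = x q * M $$ (p, q) * x p"
    "(\<Sum>i\<in>S. x i * M $$ (i, q) * x q) = x q * M $$ (p, q) * x p"
    using S(1) leaf sym by (subst S_eq, simp add: sum.insert_remove)+
  then show ?thesis
    using quad_form_insert[OF S(1,2)] e by (simp add: field_simps power2_eq_square)
qed

lemma quad_form_insert_schur_leaf:
  assumes M: "M \<in> carrier_mat n n" "symmetric_mat M"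
    and A: "A \<subseteq> {0..<n}" and p: "p < n" "p \<notin> A" and q: "q < n" "q \<notin> insert p A"
    and leaf: "\<And>a. a \<in> A \<Longrightarrow> M $$ (q, a) = 0" and e: "M $$ (q, q) \<noteq> 0"
    and pd: "pos_def_on M A"
  obtains z where "\<And>x. quad_form M (insert q (insert p A)) x
    = (x p)\<^sup>2 * (sigma_val M p A + eta_val M p q - M $$ (p, p)) + quad_form M A (\<lambda>a. x a + x p * z a)
      + M $$ (q, q) * (x q + x p * M $$ (p, q) / M $$ (q, q))\<^sup>2"
proof -
  obtain z where z: "\<And>x. quad_form M (insert p A) x
      = (x p)\<^sup>2 * sigma_val M p A + quad_form M A (\<lambda>a. x a + x p * z a)"
    using quad_form_insert_schur[OF M A p pd] by blast
  have "finite A" using A finite_subset by blast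
  have sym: "M $$ (a, b) = M $$ (b, a)" if "a < n" "b < n" for a b
    using symmetric_mat_index[OF M(2,1) that] .
  have "M $$ (q, a) = 0 \<and> M $$ (a, q) = 0" if "a \<in> insert p A" "a \<noteq> p" for a
  proof -
    have "a \<in> A" "a < n" using that A by auto
    then show ?thesis using leaf sym[of a q] q(1) by simp
  qed
  then have "quad_form M (insert q (insert p A)) x = quad_form M (insert p A) x
      - (x p)\<^sup>2 * (M $$ (p, q))\<^sup>2 / M $$ (q, q)
      + M $$ (q, q) * (x q + x p * M $$ (p, q) / M $$ (q, q))\<^sup>2" for x
    using \<open>finite A\<close> q e sym[OF p(1) q(1)] by (intro quad_form_insert_leaf) auto
  then show thesis
    by (intro that) (simp add: z eta_val_def divide_inverse algebra_simps)
qed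

lemma pos_def_on_insert_leaf_iff:
  assumes M: "M \<in> carrier_mat n n" "symmetric_mat M"
    and A: "A \<subseteq> {0..<n}" and p: "p < n" "p \<notin> A" and q: "q < n" "q \<notin> insert p A"
    and leaf: "\<And>a. a \<in> A \<Longrightarrow> M $$ (q, a) = 0" and e: "0 < M $$ (q, q)"
  shows "pos_def_on M (insert q (insert p A))
    \<longleftrightarrow> pos_def_on M (insert p A) \<and> 0 < sigma_val M p A + eta_val M p q - M $$ (p, p)"
proof (cases "pos_def_on M A")
  case False
  have "finite (insert q (insert p A))" using A finite_subset by blast
  then show ?thesis using False pos_def_on_subset by (metis finite_insert subset_insertI)
next
  case pd: True
  define D where "D = sigma_val M p A + eta_val M p q - M $$ (p, p)"
  obtain z where ident: "\<And>x. quad_form M (insert q (insert p A)) x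
      = (x p)\<^sup>2 * D + quad_form M A (\<lambda>a. x a + x p * z a)
        + M $$ (q, q) * (x q + x p * M $$ (p, q) / M $$ (q, q))\<^sup>2"
    using quad_form_insert_schur_leaf[OF M A p q leaf _ pd] e unfolding D_def by force
  have rest: "quad_form M A (\<lambda>a. x a + x p * z a) \<ge> 0" for x using pos_def_on_nonneg[OF pd] .
  have "pos_def_on M (insert q (insert p A))" if "D > 0"
  proof (rule pos_def_onI)
    fix x :: "nat \<Rightarrow> real" and i
    assume nonzero: "i \<in> insert q (insert p A)" "x i \<noteq> 0"
    consider "x p \<noteq> 0" | "x p = 0" "x q \<noteq> 0" | "x p = 0" "i \<in> A" using nonzero by auto
    then show "quad_form M (insert q (insert p A)) x > 0"
    proof cases
      case 1
      then show ?thesis unfolding ident using that e rest[of x] by (simp add: add_pos_nonneg)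
    next
      case 2
      then show ?thesis unfolding ident using e rest[of x] by (simp add: add_nonneg_pos)
    next
      case 3
      then show ?thesis unfolding ident using e pos_def_onD[OF pd 3(2), of x] nonzero(2)
        by (simp add: add_pos_nonneg)
    qed
  qed
  moreover have "D > 0" if "pos_def_on M (insert q (insert p A))"
  proof -
    \<comment> \<open>the vector that annihilates the last two squares\<close>
    define x where "x a = (if a = p then 1 else if a = q then - M $$ (p, q) / M $$ (q, q) else - z a)"
      for a
    have "quad_form M A (\<lambda>a. x a + x p * z a) = 0"
      using p q by (intro quad_form_eq_0) (auto simp: x_def)
    then have "quad_form M (insert q (insert p A)) x = D" using q unfolding ident by (simp add: x_def)
    moreover have "quad_form M (insert q (insert p A)) x > 0"
      by (rule pos_def_onD[OF that, of p]) (simp_all add: x_def)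
    ultimately show "D > 0" by simp
  qed
  moreover have "pos_def_on M (insert p A)" if "pos_def_on M (insert q (insert p A))"
    using pos_def_on_subset[OF that] A finite_subset by blast
  ultimately show ?thesis unfolding D_def by blast
qed

section \<open>Eliminating leaves one edge at a time\<close>

text \<open>Edges are indexed from \<open>0\<close>, so \<open>leaf_gap M es j\<close> is the quantity
  \<open>\<sigma> + \<eta> - M\<^sub>p\<^sub>p\<close> of the edge numbered \<open>j + 1\<close> in the statement.\<close>

definition edge_vertices :: "(nat \<times> nat) list \<Rightarrow> nat \<Rightarrow> nat set" where
  "edge_vertices es j = (\<Union>i<j. {fst (es ! i), snd (es ! i)})"

definition leaf_gap :: "real mat \<Rightarrow> (nat \<times> nat) list \<Rightarrow> nat \<Rightarrow> real" where
  "leaf_gap M es j = sigma_val M (fst (es ! j)) (edge_vertices es j - {fst (es ! j)})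
     + eta_val M (fst (es ! j)) (snd (es ! j)) - M $$ (fst (es ! j), fst (es ! j))"

lemma edge_vertices_Suc:
  "edge_vertices es (Suc j) = insert (snd (es ! j)) (insert (fst (es ! j)) (edge_vertices es j))"
  unfolding edge_vertices_def lessThan_Suc by (simp add: insert_commute)

lemma edge_vertices_1: "edge_vertices es 1 = {fst (es ! 0), snd (es ! 0)}"
  unfolding edge_vertices_def by (simp add: lessThan_Suc)

lemma pos_def_on_edge_vertices_Suc_iff:
  assumes M: "M \<in> carrier_mat n n" "symmetric_mat M"
    and lt: "edge_vertices es j \<subseteq> {0..<n}" "snd (es ! j) < n"
    and attach: "fst (es ! j) \<in> edge_vertices es j" "snd (es ! j) \<notin> edge_vertices es j"
    and leaf: "\<And>a. a \<in> edge_vertices es j \<Longrightarrow> a \<noteq> fst (es ! j) \<Longrightarrow> M $$ (snd (es ! j), a) = 0"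
    and diag: "0 < M $$ (snd (es ! j), snd (es ! j))"
  shows "pos_def_on M (edge_vertices es (Suc j))
    \<longleftrightarrow> pos_def_on M (edge_vertices es j) \<and> 0 < leaf_gap M es j"
proof -
  define p q where "p = fst (es ! j)" and "q = snd (es ! j)"
  define A where "A = edge_vertices es j - {p}"
  have V: "edge_vertices es j = insert p A" using attach(1) unfolding A_def p_def by blast
  have "pos_def_on M (insert q (insert p A))
      \<longleftrightarrow> pos_def_on M (insert p A) \<and> 0 < sigma_val M p A + eta_val M p q - M $$ (p, p)"
    using lt attach leaf diag unfolding p_def[symmetric] q_def[symmetric] V
    by (intro pos_def_on_insert_leaf_iff[OF M]) (auto simp: A_def)
  then show ?thesis
    unfolding edge_vertices_Suc leaf_gap_def p_def[symmetric] q_def[symmetric]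
    unfolding A_def[symmetric] unfolding V insert_absorb2 .
qed

lemma pos_def_on_edge_vertices_iff:
  assumes M: "M \<in> carrier_mat n n" "symmetric_mat M"
    and diag: "\<And>v. v < n \<Longrightarrow> 0 < M $$ (v, v)"
    and lt: "\<And>i. i < length es \<Longrightarrow> fst (es ! i) < n \<and> snd (es ! i) < n"
    and attach: "\<And>j. 1 \<le> j \<Longrightarrow> j < length es
      \<Longrightarrow> fst (es ! j) \<in> edge_vertices es j \<and> snd (es ! j) \<notin> edge_vertices es j"
    and leaf: "\<And>j a. 1 \<le> j \<Longrightarrow> j < length es \<Longrightarrow> a \<in> edge_vertices es j \<Longrightarrow> a \<noteq> fst (es ! j)
      \<Longrightarrow> M $$ (snd (es ! j), a) = 0"
    and first: "pos_def_on M (edge_vertices es 1)"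
    and k: "1 \<le> k" "k \<le> length es"
  shows "pos_def_on M (edge_vertices es k) \<longleftrightarrow> (\<forall>j\<in>{1..<k}. 0 < leaf_gap M es j)"
  using k
proof (induction k rule: dec_induct)
  case base
  then show ?case using first by simp
next
  case (step j)
  then have j: "j < length es" by simp
  have "edge_vertices es j \<subseteq> {0..<n}" using lt j unfolding edge_vertices_def by fastforce
  then have "pos_def_on M (edge_vertices es (Suc j))
      \<longleftrightarrow> pos_def_on M (edge_vertices es j) \<and> 0 < leaf_gap M es j"
    using lt[OF j] attach[OF step(1) j] leaf[OF step(1) j] diag
    by (intro pos_def_on_edge_vertices_Suc_iff[OF M]) auto
  moreover have "{1..<Suc j} = insert j {1..<j}" using step(1) by auto
  ultimately show ?case using step.IH step.prems by auto
qed

section \<open>Breadth-first enumeration of an ordered rooted tree\<close>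

lemma distinct_concat_map:
  assumes "distinct xs" "\<And>x. x \<in> set xs \<Longrightarrow> distinct (f x)"
    "\<And>x y. x \<in> set xs \<Longrightarrow> y \<in> set xs \<Longrightarrow> x \<noteq> y \<Longrightarrow> set (f x) \<inter> set (f y) = {}"
  shows "distinct (concat (map f xs))"
  using assms by (induction xs) auto

locale ordered_tree =
  fixes n v0 :: nat and ch :: "nat \<Rightarrow> nat list"
  assumes tree: "ordered_rooted_tree n v0 ch"
begin

abbreviation es :: "(nat \<times> nat) list" where "es \<equiv> bfs_edges n v0 ch"

definition child_rel :: "nat rel" where "child_rel = {(u, c). c \<in> set (ch u)}"
definition parent :: "nat \<Rightarrow> nat" where "parent w = (THE v. v < n \<and> w \<in> set (ch v))"
definition depth :: "nat \<Rightarrow> nat" where "depth w = (SOME d. w \<in> set (level ch v0 d))"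
definition bfs_order :: "nat list" where "bfs_order = concat (map (level ch v0) [0..<n])"

lemma root_lt: "v0 < n"
  using tree unfolding ordered_rooted_tree_def by blast

lemma child_lt: "c \<in> set (ch u) \<Longrightarrow> c < n"
  using tree unfolding ordered_rooted_tree_def by (meson atLeastLessThan_iff subsetD)

lemma distinct_children: "distinct (ch u)"
  using tree unfolding ordered_rooted_tree_def by auto

lemma parent_lt: "c \<in> set (ch u) \<Longrightarrow> u < n"
  using tree unfolding ordered_rooted_tree_def by (metis empty_iff empty_set not_le)

lemma child_ne_root: "c \<in> set (ch u) \<Longrightarrow> c \<noteq> v0"
  using tree parent_lt unfolding ordered_rooted_tree_def by blast

lemma tree_adj_lt: "tree_adj ch u w \<Longrightarrow> u < n \<and> w < n"
  unfolding tree_adj_def using child_lt parent_lt by blast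

lemma parent_unique: "c \<in> set (ch u) \<Longrightarrow> c \<in> set (ch u') \<Longrightarrow> u = u'"
proof -
  assume c: "c \<in> set (ch u)" "c \<in> set (ch u')"
  have "c < n" "c \<noteq> v0" using c child_lt child_ne_root by auto
  then have "\<exists>!v. v < n \<and> c \<in> set (ch v)" using tree unfolding ordered_rooted_tree_def by blast
  then show "u = u'" using c parent_lt by blast
qed

lemma parent_eqI: "c \<in> set (ch u) \<Longrightarrow> parent c = u"
  unfolding parent_def using parent_unique parent_lt by (intro the_equality) auto

lemma level_lt: "w \<in> set (level ch v0 d) \<Longrightarrow> w < n"
  by (cases d) (auto simp: root_lt child_lt)

lemma in_level_iff_relpow: "w \<in> set (level ch v0 d) \<longleftrightarrow> (v0, w) \<in> child_rel ^^ d"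
proof (induction d arbitrary: w)
  case (Suc d)
  have "(u, c) \<in> child_rel \<longleftrightarrow> c \<in> set (ch u)" for u c by (simp add: child_rel_def)
  then show ?case using Suc.IH by (auto simp: relcomp_unfold)
qed auto

lemma in_level_unique: "w \<in> set (level ch v0 d) \<Longrightarrow> w \<in> set (level ch v0 d') \<Longrightarrow> d = d'"
proof (induction d arbitrary: d' w)
  case 0
  then show ?case using child_ne_root by (cases d') auto
next
  case (Suc d)
  then obtain u where u: "u \<in> set (level ch v0 d)" "w \<in> set (ch u)" by auto
  show ?case
  proof (cases d')
    case 0
    then show ?thesis using Suc.prems u child_ne_root by auto
  next
    case (Suc d'')
    then obtain u' where "u' \<in> set (level ch v0 d'')" "w \<in> set (ch u')" using Suc.prems by auto
    then show ?thesis using Suc.IH[OF u(1)] parent_unique[OF u(2)] Suc by blast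
  qed
qed

lemma depth_eqI: "w \<in> set (level ch v0 d) \<Longrightarrow> depth w = d"
  unfolding depth_def by (rule some_equality) (auto intro: in_level_unique)

lemma card_child_rel_less: "card child_rel < n"
proof -
  have "child_rel \<subseteq> (\<lambda>c. (parent c, c)) ` ({0..<n} - {v0})"
    unfolding child_rel_def using child_lt child_ne_root parent_eqI by force
  then have "card child_rel \<le> card ((\<lambda>c. (parent c, c)) ` ({0..<n} - {v0}))"
    by (rule card_mono[rotated]) simp
  also have "\<dots> \<le> card ({0..<n} - {v0})" by (rule card_image_le) simp
  also have "\<dots> < n" using root_lt by simp
  finally show ?thesis .
qed

lemma finite_child_rel: "finite child_rel"
proof -
  have "child_rel \<subseteq> {0..<n} \<times> {0..<n}" unfolding child_rel_def using child_lt parent_lt by auto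
  then show ?thesis by (rule finite_subset) simp
qed

text \<open>A vertex at depth \<open>d\<close> is reached by a path of length \<open>d\<close> in the child relation, and
  in a finite relation reachability is witnessed by a path of length at most its cardinality.\<close>

lemma in_level_depth_less: "w \<in> set (level ch v0 d) \<Longrightarrow> d < n"
proof -
  assume w: "w \<in> set (level ch v0 d)"
  then have "(v0, w) \<in> child_rel\<^sup>*" using in_level_iff_relpow by (meson relpow_imp_rtrancl)
  then obtain d' where "d' \<le> card child_rel" "(v0, w) \<in> child_rel ^^ d'"
    using rtrancl_finite_eq_relpow[OF finite_child_rel] by blast
  then have "d' = d" using w in_level_iff_relpow in_level_unique by blast
  then show "d < n" using \<open>d' \<le> card child_rel\<close> card_child_rel_less by simp
qed

lemma ex_level: "w < n \<Longrightarrow> \<exists>d. w \<in> set (level ch v0 d)"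
proof -
  assume "w < n"
  then have "(v0, w) \<in> child_rel\<^sup>*"
    using tree unfolding ordered_rooted_tree_def child_rel_def by blast
  then show ?thesis using rtrancl_imp_relpow in_level_iff_relpow by blast
qed

lemma distinct_level: "distinct (level ch v0 d)"
proof (induction d)
  case (Suc d)
  show ?case unfolding level.simps
    by (rule distinct_concat_map[OF Suc]) (auto simp: distinct_children dest: parent_unique)
qed simp

lemma level_n_Nil: "level ch v0 n = []"
  using in_level_depth_less by (cases "level ch v0 n") (auto, metis list.set_intros(1) less_irrefl)

lemma set_bfs_order: "set bfs_order = {0..<n}"
  unfolding bfs_order_def using level_lt ex_level in_level_depth_less by fastforce

lemma distinct_bfs_order: "distinct bfs_order"
  unfolding bfs_order_def
  by (rule distinct_concat_map) (auto simp: distinct_level dest: in_level_unique)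

lemma length_bfs_order: "length bfs_order = n"
  using distinct_card[OF distinct_bfs_order] set_bfs_order by simp

lemma bfs_order_Cons: "bfs_order = v0 # concat (map (level ch v0) [1..<n])"
  unfolding bfs_order_def using root_lt by (simp add: upt_conv_Cons)

lemma sorted_depth_levels: "sorted (map depth (concat (map (level ch v0) [0..<m])))"
proof (induction m)
  case (Suc m)
  have "map depth (level ch v0 m) = map (\<lambda>_. m) (level ch v0 m)"
    by (rule map_cong) (auto simp: depth_eqI)
  then have "sorted (map depth (level ch v0 m))" by (simp add: map_replicate_const)
  then show ?case using Suc by (auto simp: sorted_append depth_eqI)
qed simp

lemma bfs_order_index_less:
  assumes "i < n" "j < n" "depth (bfs_order ! i) < depth (bfs_order ! j)"
  shows "i < j"
proof (rule ccontr)
  assume "\<not> i < j"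
  then have "map depth bfs_order ! j \<le> map depth bfs_order ! i"
    using sorted_depth_levels[of n] assms length_bfs_order
    by (intro sorted_nth_mono) (auto simp: bfs_order_def)
  then show False using assms length_bfs_order by simp
qed

lemma depth_child: "c \<in> set (ch u) \<Longrightarrow> depth c = Suc (depth u)"
proof -
  assume c: "c \<in> set (ch u)"
  obtain d where d: "u \<in> set (level ch v0 d)" using ex_level parent_lt[OF c] by blast
  then have "c \<in> set (level ch v0 (Suc d))" using c by auto
  then show ?thesis using d depth_eqI by simp
qed

lemma bfs_order_nth_child:
  assumes "0 < i" "i < n"
  shows "bfs_order ! i \<in> set (ch (parent (bfs_order ! i)))"
proof -
  let ?w = "bfs_order ! i"
  have "?w \<in> set bfs_order" using assms length_bfs_order by simp
  then obtain d where w: "?w \<in> set (level ch v0 d)" unfolding bfs_order_def by auto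
  have "?w \<noteq> bfs_order ! 0"
    using nth_eq_iff_index_eq[OF distinct_bfs_order, of i 0] assms length_bfs_order by simp
  then have "?w \<noteq> v0" using bfs_order_Cons by simp
  then obtain d' where "d = Suc d'" using w by (cases d) auto
  then obtain u where "?w \<in> set (ch u)" using w by auto
  then show ?thesis using parent_eqI by simp
qed

lemma parent_earlier:
  assumes "0 < i" "i < n"
  obtains j where "j < i" "bfs_order ! j = parent (bfs_order ! i)"
proof -
  have c: "bfs_order ! i \<in> set (ch (parent (bfs_order ! i)))" using bfs_order_nth_child assms .
  then obtain j where j: "j < n" "bfs_order ! j = parent (bfs_order ! i)"
    using parent_lt set_bfs_order length_bfs_order
    by (metis atLeastLessThan_iff in_set_conv_nth zero_le)
  then have "j < i" using bfs_order_index_less depth_child[OF c] assms by simp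
  then show ?thesis using that j by blast
qed

lemma bfs_edges_eq: "es = map (\<lambda>w. (parent w, w)) (tl bfs_order)"
proof -
  let ?e = "\<lambda>w. (parent w, w)"
  have "concat (map (\<lambda>p. map (\<lambda>c. (p, c)) (ch p)) (level ch v0 d)) = map ?e (level ch v0 (Suc d))"
    for d
  proof -
    have "map ?e (level ch v0 (Suc d)) = concat (map (\<lambda>p. map ?e (ch p)) (level ch v0 d))"
      by (simp add: map_concat comp_def)
    also have "\<dots> = concat (map (\<lambda>p. map (\<lambda>c. (p, c)) (ch p)) (level ch v0 d))"
      by (intro arg_cong[where f = concat] map_cong refl) (auto simp: parent_eqI)
    finally show ?thesis by simp
  qed
  then have "es = concat (map (\<lambda>d. map ?e (level ch v0 (Suc d))) [0..<n])"
    unfolding bfs_edges_def by simp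
  also have "\<dots> = map ?e (concat (map (level ch v0) (map Suc [0..<n])))"
    by (simp add: map_concat comp_def)
  also have "\<dots> = map ?e (concat (map (level ch v0) [1..<n]))"
    using root_lt by (simp add: map_Suc_upt level_n_Nil)
  also have "\<dots> = map ?e (tl bfs_order)" using bfs_order_Cons by simp
  finally show ?thesis .
qed

lemma length_bfs_edges: "length es = n - 1"
  unfolding bfs_edges_eq using length_bfs_order by simp

lemma nth_bfs_edges: "i < length es \<Longrightarrow> es ! i = (parent (bfs_order ! Suc i), bfs_order ! Suc i)"
  unfolding bfs_edges_eq using length_bfs_order by (simp add: nth_tl)

lemma bfs_edge_child: "i < length es \<Longrightarrow> snd (es ! i) \<in> set (ch (fst (es ! i)))"
  using bfs_order_nth_child[of "Suc i"] length_bfs_edges nth_bfs_edges by simp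

lemma bfs_edge_lt: "i < length es \<Longrightarrow> fst (es ! i) < n \<and> snd (es ! i) < n"
  using bfs_edge_child child_lt parent_lt by blast

lemma fst_bfs_edge_earlier:
  assumes "i < length es"
  obtains l where "l < Suc i" "fst (es ! i) = bfs_order ! l"
proof -
  have "Suc i < n" using assms length_bfs_edges by simp
  then obtain l where "l < Suc i" "bfs_order ! l = parent (bfs_order ! Suc i)"
    using parent_earlier[of "Suc i"] by blast
  then show thesis using that nth_bfs_edges[OF assms] by simp
qed

lemma in_take_bfs_order: "x \<in> set (take m bfs_order) \<longleftrightarrow> (\<exists>l<m. l < n \<and> x = bfs_order ! l)"
  unfolding in_set_conv_nth using length_bfs_order by auto

lemma edge_vertices_bfs_edges:
  assumes "1 \<le> j" "j \<le> length es"
  shows "edge_vertices es j = set (take (Suc j) bfs_order)"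
proof
  show "edge_vertices es j \<subseteq> set (take (Suc j) bfs_order)"
  proof
    fix x assume "x \<in> edge_vertices es j"
    then obtain i where i: "i < j" "x = fst (es ! i) \<or> x = snd (es ! i)"
      unfolding edge_vertices_def by auto
    then have il: "i < length es" "Suc i < n" using assms length_bfs_edges by auto
    show "x \<in> set (take (Suc j) bfs_order)"
    proof (cases "x = snd (es ! i)")
      case True
      then show ?thesis unfolding in_take_bfs_order using nth_bfs_edges[OF il(1)] il i by auto
    next
      case False
      obtain l where l: "l < Suc i" "fst (es ! i) = bfs_order ! l"
        using fst_bfs_edge_earlier[OF il(1)] .
      then have "l < Suc j" "l < n" using i il by auto
      then show ?thesis unfolding in_take_bfs_order using False i l by blast
    qed
  qed
next
  show "set (take (Suc j) bfs_order) \<subseteq> edge_vertices es j"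
  proof
    fix x assume "x \<in> set (take (Suc j) bfs_order)"
    then obtain l where l: "l < Suc j" "l < n" "x = bfs_order ! l" unfolding in_take_bfs_order by auto
    show "x \<in> edge_vertices es j"
    proof (cases l)
      case 0
      have "0 < length es" using assms by linarith
      then obtain l' where "l' < Suc 0" "fst (es ! 0) = bfs_order ! l'" by (rule fst_bfs_edge_earlier)
      then have "x = fst (es ! 0)" using l 0 by simp
      then show ?thesis using assms unfolding edge_vertices_def by force
    next
      case (Suc l')
      then have "x = snd (es ! l')" using l assms nth_bfs_edges by simp
      then show ?thesis using l Suc unfolding edge_vertices_def by blast
    qed
  qed
qed

lemma fst_bfs_edge_mem:
  assumes "1 \<le> j" "j < length es"
  shows "fst (es ! j) \<in> edge_vertices es j"
proof -
  obtain l where "l < Suc j" "fst (es ! j) = bfs_order ! l" using fst_bfs_edge_earlier assms(2) .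
  then show ?thesis
    unfolding edge_vertices_bfs_edges[OF assms(1) less_imp_le[OF assms(2)]] in_take_bfs_order
    using assms(2) length_bfs_edges by auto
qed

lemma snd_bfs_edge_not_mem:
  assumes "1 \<le> j" "j < length es"
  shows "snd (es ! j) \<notin> edge_vertices es j"
proof
  assume "snd (es ! j) \<in> edge_vertices es j"
  then obtain l where l: "l < Suc j" "l < n" "snd (es ! j) = bfs_order ! l"
    unfolding edge_vertices_bfs_edges[OF assms(1) less_imp_le[OF assms(2)]] in_take_bfs_order
    by auto
  then have "bfs_order ! Suc j = bfs_order ! l" using nth_bfs_edges[OF assms(2)] by simp
  then have "Suc j = l"
    using nth_eq_iff_index_eq[OF distinct_bfs_order] l assms(2) length_bfs_edges length_bfs_order
    by simp
  then show False using l by simp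
qed

text \<open>A neighbour of the new vertex \<open>q\<^sub>j\<close> visited before it is its parent: its children
  are deeper, hence come later in breadth-first order.\<close>

lemma bfs_edge_visited_neighbour:
  assumes "1 \<le> j" "j < length es" "u \<in> edge_vertices es j" "tree_adj ch (snd (es ! j)) u"
  shows "u = fst (es ! j)"
proof -
  let ?q = "snd (es ! j)"
  obtain l where l: "l < Suc j" "l < n" "u = bfs_order ! l"
    using assms(3)
    unfolding edge_vertices_bfs_edges[OF assms(1) less_imp_le[OF assms(2)]] in_take_bfs_order
    by auto
  have q: "?q = bfs_order ! Suc j" using nth_bfs_edges[OF assms(2)] by simp
  show ?thesis
  proof (cases "u \<in> set (ch ?q)")
    case True
    then have "depth u = Suc (depth ?q)" by (rule depth_child)
    moreover have "Suc j < n" using assms(2) length_bfs_edges by simp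
    ultimately have "Suc j < l" using bfs_order_index_less[of "Suc j" l] l q by simp
    then show ?thesis using l by simp
  next
    case False
    then have "?q \<in> set (ch u)" using assms(4) unfolding tree_adj_def by blast
    then show ?thesis using parent_eqI nth_bfs_edges[OF assms(2)] by simp
  qed
qed

lemma edge_vertices_bfs_edges_all:
  assumes "es \<noteq> []"
  shows "edge_vertices es (length es) = {0..<n}"
proof -
  have "1 \<le> length es" using assms by (simp add: Suc_leI)
  then show ?thesis
    using edge_vertices_bfs_edges[of "length es"] length_bfs_edges length_bfs_order set_bfs_order
    by simp
qed

lemma bfs_edges_Nil: "es = [] \<Longrightarrow> {0..<n} = {v0}"
  using length_bfs_edges root_lt by auto

lemma pos_def_on_tree_iff:
  assumes M: "M \<in> carrier_mat n n" "symmetric_mat M"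
    and zero: "\<And>u w. u < n \<Longrightarrow> w < n \<Longrightarrow> u \<noteq> w \<Longrightarrow> \<not> tree_adj ch u w \<Longrightarrow> M $$ (u, w) = 0"
    and diag: "\<And>v. v < n \<Longrightarrow> 0 < M $$ (v, v)"
    and edge: "\<And>u w. tree_adj ch u w \<Longrightarrow> pos_def_on M {u, w}"
  shows "pos_def_on M {0..<n} \<longleftrightarrow> (\<forall>j\<in>{1..<length es}. 0 < leaf_gap M es j)"
proof (cases "es = []")
  case True
  then show ?thesis using bfs_edges_Nil diag root_lt pos_def_on_singleton_iff by simp
next
  case False
  have leaf: "M $$ (snd (es ! j), a) = 0"
    if "1 \<le> j" "j < length es" "a \<in> edge_vertices es j" "a \<noteq> fst (es ! j)" for j a
  proof (rule zero)
    show "snd (es ! j) \<noteq> a" using snd_bfs_edge_not_mem that by blast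
    show "\<not> tree_adj ch (snd (es ! j)) a" using bfs_edge_visited_neighbour that by blast
    show "snd (es ! j) < n" using bfs_edge_lt that(2) by blast
    show "a < n" using that(2,3) bfs_edge_lt unfolding edge_vertices_def by fastforce
  qed
  have "pos_def_on M (edge_vertices es 1)"
    unfolding edge_vertices_1 using False bfs_edge_child[of 0] by (intro edge) (simp add: tree_adj_def)
  then have "pos_def_on M (edge_vertices es (length es))
      \<longleftrightarrow> (\<forall>j\<in>{1..<length es}. 0 < leaf_gap M es j)"
    using False fst_bfs_edge_mem snd_bfs_edge_not_mem leaf
    by (intro pos_def_on_edge_vertices_iff[OF M diag bfs_edge_lt]) (auto simp: Suc_leI)
  then show ?thesis using edge_vertices_bfs_edges_all[OF False] by simp
qed

end

section \<open>The tree part of a symmetric matrix\<close>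

lemma tree_adj_commute: "tree_adj ch i j = tree_adj ch j i"
  unfolding tree_adj_def by auto

lemma tree_part_carrier: "N \<in> carrier_mat n n \<Longrightarrow> tree_part ch N \<in> carrier_mat n n"
  unfolding tree_part_def by auto

lemma tree_part_index:
  "N \<in> carrier_mat n n \<Longrightarrow> i < n \<Longrightarrow> j < n
    \<Longrightarrow> tree_part ch N $$ (i, j) = (if i = j \<or> tree_adj ch i j then N $$ (i, j) else 0)"
  unfolding tree_part_def by auto

lemma symmetric_mat_tree_part:
  assumes N: "N \<in> carrier_mat n n" and "symmetric_mat N"
  shows "symmetric_mat (tree_part ch N)"
  unfolding symmetric_mat_def
proof (rule eq_matI)
  fix i j assume "i < dim_row (tree_part ch N)" "j < dim_col (tree_part ch N)"
  then have "i < n" "j < n" using N by (auto simp: tree_part_def)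
  then show "(tree_part ch N)\<^sup>T $$ (i, j) = tree_part ch N $$ (i, j)"
    using N symmetric_mat_index[OF assms(2) N] tree_adj_commute
    by (simp add: tree_part_index[OF N] tree_part_def)
qed (use N in \<open>auto simp: tree_part_def\<close>)

lemma pos_def_on_tree_part_iff:
  assumes N: "N \<in> carrier_mat n n" and S: "S \<subseteq> {0..<n}"
    and adj: "\<And>a b. a \<in> S \<Longrightarrow> b \<in> S \<Longrightarrow> a \<noteq> b \<Longrightarrow> tree_adj ch a b"
  shows "pos_def_on (tree_part ch N) S = pos_def_on N S"
proof (rule pos_def_on_cong)
  fix a b assume "a \<in> S" "b \<in> S"
  then show "tree_part ch N $$ (a, b) = N $$ (a, b)"
    using S adj by (subst tree_part_index[OF N]) auto
qed

lemma pos_def_on_tree_part: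
  assumes N: "N \<in> carrier_mat n n" "pos_def N" and S: "S \<subseteq> {0..<n}"
    and adj: "\<And>a b. a \<in> S \<Longrightarrow> b \<in> S \<Longrightarrow> a \<noteq> b \<Longrightarrow> tree_adj ch a b"
  shows "pos_def_on (tree_part ch N) S"
proof -
  have "pos_def_on N S"
    using pos_def_on_subset[OF _ S] pos_def_iff_pos_def_on[OF N(1)] N(2) by blast
  then show ?thesis using pos_def_on_tree_part_iff[OF N(1) S adj] by simp
qed

lemma UN_atLeastLessThan_Suc_shift: "(\<Union>i\<in>{1..<Suc m}. g (i - 1)) = (\<Union>i<m. g i)"
proof (intro equalityI subsetI)
  fix x assume "x \<in> (\<Union>i\<in>{1..<Suc m}. g (i - 1))"
  then obtain i where "i \<in> {1..<Suc m}" "x \<in> g (i - 1)" by blast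
  then show "x \<in> (\<Union>i<m. g i)" by (intro UN_I[of "i - 1"]) auto
next
  fix x assume "x \<in> (\<Union>i<m. g i)"
  then obtain i where "i < m" "x \<in> g i" by blast
  then show "x \<in> (\<Union>i\<in>{1..<Suc m}. g (i - 1))" by (intro UN_I[of "Suc i"]) auto
qed

lemma ball_atLeastAtMost_2_shift: "(\<forall>j\<in>{2..k}. P j) \<longleftrightarrow> (\<forall>j\<in>{1..<k}. P (Suc j))"
proof
  assume "\<forall>j\<in>{2..k}. P j"
  then show "\<forall>j\<in>{1..<k}. P (Suc j)" by simp
next
  assume shifted: "\<forall>j\<in>{1..<k}. P (Suc j)"
  show "\<forall>j\<in>{2..k}. P j"
  proof
    fix j assume "j \<in> {2..k}"
    then obtain i where "j = Suc i" "i \<in> {1..<k}" by (cases j) auto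
    then show "P j" using shifted by simp
  qed
qed

lemma leaf_gap_reindex:
  "(\<forall>j\<in>{2..length es}. sigma_val M (fst (es ! (j - 1)))
      ((\<Union>i\<in>{1..<j}. {fst (es ! (i - 1)), snd (es ! (i - 1))}) - {fst (es ! (j - 1))})
    + eta_val M (fst (es ! (j - 1))) (snd (es ! (j - 1))) - M $$ (fst (es ! (j - 1)), fst (es ! (j - 1)))
    > 0)
  \<longleftrightarrow> (\<forall>j\<in>{1..<length es}. 0 < leaf_gap M es j)"
  unfolding ball_atLeastAtMost_2_shift diff_Suc_1
    UN_atLeastLessThan_Suc_shift[of "\<lambda>i. {fst (es ! i), snd (es ! i)}"]
  unfolding leaf_gap_def edge_vertices_def ..

theorem corollary6:
  fixes n v0 :: nat and ch :: "nat \<Rightarrow> nat list" and N :: "real mat"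
  assumes "ordered_rooted_tree n v0 ch"
    and "N \<in> carrier_mat n n" and "symmetric_mat N" and "pos_def N"
  shows "pos_def (tree_part ch N) \<longleftrightarrow>
    (let M = tree_part ch N; es = bfs_edges n v0 ch; k = length es;
         p = (\<lambda>j. fst (es ! (j - 1))); q = (\<lambda>j. snd (es ! (j - 1)));
         A = (\<lambda>j. (\<Union>i\<in>{1..<j}. {p i, q i}) - {p j})
     in \<forall>j\<in>{2..k}. sigma_val M (p j) (A j) + eta_val M (p j) (q j) - M $$ (p j, p j) > 0)"
proof -
  interpret ordered_tree n v0 ch by (rule ordered_tree.intro) fact
  define M where "M = tree_part ch N"
  have M: "M \<in> carrier_mat n n" "symmetric_mat M"
    unfolding M_def using assms(2,3) by (simp_all add: tree_part_carrier symmetric_mat_tree_part)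
  have "pos_def M \<longleftrightarrow> (\<forall>j\<in>{1..<length es}. 0 < leaf_gap M es j)"
    unfolding pos_def_iff_pos_def_on[OF M(1)]
  proof (rule pos_def_on_tree_iff[OF M])
    show "M $$ (u, w) = 0" if "u < n" "w < n" "u \<noteq> w" "\<not> tree_adj ch u w" for u w
      using that assms(2) unfolding M_def by (simp add: tree_part_index)
    show "0 < M $$ (v, v)" if "v < n" for v
      using pos_def_on_tree_part[OF assms(2,4), of "{v}"] that pos_def_on_singleton_iff
      unfolding M_def by simp
    show "pos_def_on M {u, w}" if "tree_adj ch u w" for u w
      unfolding M_def
    proof (rule pos_def_on_tree_part[OF assms(2,4)])
      show "{u, w} \<subseteq> {0..<n}" using tree_adj_lt[OF that] by simp
      show "tree_adj ch a b" if "a \<in> {u, w}" "b \<in> {u, w}" "a \<noteq> b" for a b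
        using that \<open>tree_adj ch u w\<close> tree_adj_commute by auto
    qed
  qed
  then show ?thesis unfolding Let_def M_def leaf_gap_reindex .
qed

end
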